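(* Let $k\ge2$, $C>0$, $\lambda_1,\dots,\lambda_k\in(0,1)$ with $\sum_i\lambda_i=1$, and let $V_1,\dots,V_k$ be measurable functions on $\mathbb{R}^n$ with $e^{-V_i}$ integrable, satisfying $$\sum_{i=1}^k\lambda_iV_i(x_i)\ge C\sum_{1\le i<j\le k}\lambda_i\lambda_j\langle x_i,x_j\rangle\quad\text{for all }x_1,\dots,x_k\in\mathbb{R}^n .$$ Let $(\lambda_1U_1,\dots,\lambda_kU_k)$ be a solution to the dual multimarginal problem with marginals $\mu_i=\frac{e^{-V_i}dx_i}{\int e^{-V_i}dx_i}$ and cost $c(x_1,\dots,x_k)=C\sum_{1\le i<j\le k}\lambda_i\lambda_j\langle x_i,x_j\rangle$. Then $$\prod_{i=1}^k\Bigl(\int e^{-V_i}dx_i\Bigr)^{\lambda_i}\le\prod_{i=1}^k\Bigl(\int e^{-U_i}dx_i\Bigr)^{\lambda_i}.$$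
   Context: The multimarginal Kantorovich maximization problem with marginals $\mu_1,\dots,\mu_k$ and cost $c$ is to maximize $\int c\,dP$ over probability measures $P$ on $(\mathbb{R}^n)^k$ with marginals $\mu_1,\dots,\mu_k$. Its dual problem is to minimize $\sum_{i=1}^k\int w_i\,d\mu_i$ over tuples $(w_1,\dots,w_k)$ of functions with $\sum_{i=1}^kw_i(x_i)\ge c(x_1,\dots,x_k)$ for all $x_1,\dots,x_k$; a solution is a minimizing tuple (at which equality $\sum_iw_i(x_i)=c(x_1,\dots,x_k)$ holds almost everywhere with respect to an optimal plan $P$). *)

theory Defs
  imports "HOL-Analysis.Analysis"
begin

definition mm_cost :: "nat \<Rightarrow> real \<Rightarrow> (nat \<Rightarrow> real) \<Rightarrow> (nat \<Rightarrow> 'a::real_inner) \<Rightarrow> real" where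
  "mm_cost k C lam x = C * (\<Sum>i<k. \<Sum>j\<in>{i<..<k}. lam i * lam j * inner (x i) (x j))"

definition gibbs_measure :: "('a::euclidean_space \<Rightarrow> real) \<Rightarrow> 'a measure" where
  "gibbs_measure V = density lborel
     (\<lambda>x. ennreal (exp (- V x) / (\<integral>y. exp (- V y) \<partial>lborel)))"

definition dual_admissible ::
  "nat \<Rightarrow> (nat \<Rightarrow> 'a measure) \<Rightarrow> ((nat \<Rightarrow> 'a) \<Rightarrow> real) \<Rightarrow> (nat \<Rightarrow> 'a \<Rightarrow> real) \<Rightarrow> bool" where
  "dual_admissible k \<mu> c w \<longleftrightarrow>
     (\<forall>i<k. integrable (\<mu> i) (w i)) \<and> (\<forall>x. c x \<le> (\<Sum>i<k. w i (x i)))"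

definition dual_value :: "nat \<Rightarrow> (nat \<Rightarrow> 'a measure) \<Rightarrow> (nat \<Rightarrow> 'a \<Rightarrow> real) \<Rightarrow> real" where
  "dual_value k \<mu> w = (\<Sum>i<k. \<integral>x. w i x \<partial>(\<mu> i))"

definition dual_solution ::
  "nat \<Rightarrow> (nat \<Rightarrow> 'a measure) \<Rightarrow> ((nat \<Rightarrow> 'a) \<Rightarrow> real) \<Rightarrow> (nat \<Rightarrow> 'a \<Rightarrow> real) \<Rightarrow> bool" where
  "dual_solution k \<mu> c w \<longleftrightarrow> dual_admissible k \<mu> c w \<and>
     (\<forall>w'. dual_admissible k \<mu> c w' \<longrightarrow> dual_value k \<mu> w \<le> dual_value k \<mu> w')"

end

theory Submission
  imports Defs "HOL-Probability.Probability"
begin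

(* The cost is affine in each x_i separately; testing the cost inequality at points whose other
   coordinates all equal a suitable u shows that each V_i lies above every linear functional up
   to a constant.  Such V_i are integrable against their own Gibbs measure mu_i, hence (lam_i V_i) is
   an admissible dual tuple and optimality of (lam_i U_i) gives sum_i lam_i a_i >= 0 with
   a_i = int (V_i - U_i) dmu_i.  Jensen's inequality for exp under mu_i gives
   int e^(-U_i) = Z_i int e^(V_i - U_i) dmu_i >= Z_i e^(a_i), where Z_i = int e^(-V_i), and the
   lam-weighted geometric mean of these bounds is the claim. *)

lemma sum_lessThan_Suc_upper_pairs:
  fixes f :: "nat \<Rightarrow> nat \<Rightarrow> 'b::comm_monoid_add"
  shows "(\<Sum>i<Suc k. \<Sum>j\<in>{i<..<Suc k}. f i j) = (\<Sum>i<k. \<Sum>j\<in>{i<..<k}. f i j) + (\<Sum>i<k. f i k)"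
proof -
  have "{i<..<Suc k} = insert k {i<..<k}" if "i < k" for i
    using that by auto
  then have "(\<Sum>i<k. \<Sum>j\<in>{i<..<Suc k}. f i j) = (\<Sum>i<k. (\<Sum>j\<in>{i<..<k}. f i j) + f i k)"
    by (intro sum.cong) (auto simp: add.commute)
  moreover have "{k<..<Suc k} = {}"
    by auto
  ultimately show ?thesis
    by (simp add: sum.distrib)
qed

lemma two_mult_sum_pairs_inner:
  fixes x :: "nat \<Rightarrow> 'a::real_inner" and lam :: "nat \<Rightarrow> real"
  shows "2 * (\<Sum>i<k. \<Sum>j\<in>{i<..<k}. lam i * lam j * inner (x i) (x j))
    = inner (\<Sum>i<k. lam i *\<^sub>R x i) (\<Sum>i<k. lam i *\<^sub>R x i) - (\<Sum>i<k. (lam i)\<^sup>2 * inner (x i) (x i))"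
proof (induction k)
  case (Suc k)
  have "inner (\<Sum>i<k. lam i *\<^sub>R x i) (x k) = (\<Sum>i<k. lam i * inner (x i) (x k))"
    by (simp add: inner_sum_left)
  with Suc show ?case
    unfolding sum_lessThan_Suc_upper_pairs
    by (simp add: algebra_simps inner_commute sum_distrib_left power2_eq_square)
qed simp

lemma mm_cost_fun_upd:
  fixes x :: "nat \<Rightarrow> 'a::real_inner"
  assumes "i < k"
  shows "mm_cost k C lam (x(i := y))
    = C * lam i * inner y (\<Sum>j\<in>{..<k} - {i}. lam j *\<^sub>R x j) + mm_cost k C lam (x(i := 0))"
proof -
  define s where "s = (\<Sum>j\<in>{..<k} - {i}. lam j *\<^sub>R x j)"
  define r where "r = (\<Sum>j\<in>{..<k} - {i}. (lam j)\<^sup>2 * inner (x j) (x j))"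
  have fin: "finite {..<k}" and i: "i \<in> {..<k}"
    using assms by auto
  have "2 * mm_cost k C lam (x(i := z))
      = C * (inner (lam i *\<^sub>R z + s) (lam i *\<^sub>R z + s) - ((lam i)\<^sup>2 * inner z z + r))" for z
  proof -
    have "(\<Sum>j<k. lam j *\<^sub>R (x(i := z)) j) = lam i *\<^sub>R z + s"
      unfolding sum.remove[OF fin i] s_def by (auto intro!: sum.cong)
    moreover have "(\<Sum>j<k. (lam j)\<^sup>2 * inner ((x(i := z)) j) ((x(i := z)) j)) = (lam i)\<^sup>2 * inner z z + r"
      unfolding sum.remove[OF fin i] r_def by (auto intro!: sum.cong)
    ultimately show ?thesis
      using two_mult_sum_pairs_inner[of lam "x(i := z)" k] by (simp add: mm_cost_def)
  qed
  from this[of y] this[of 0] show ?thesis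
    unfolding s_def by (simp add: algebra_simps inner_commute power2_eq_square)
qed

definition superlinear :: "('a::real_inner \<Rightarrow> real) \<Rightarrow> bool" where
  "superlinear V \<longleftrightarrow> (\<forall>w. \<exists>K. \<forall>y. inner y w - K \<le> V y)"

lemma superlinear_of_mm_cost_le:
  fixes V :: "nat \<Rightarrow> 'a::real_inner \<Rightarrow> real"
  assumes "i < k" and "0 < lam i" and "lam i < 1" and "(\<Sum>j<k. lam j) = 1" and "C > 0"
    and cost_le: "\<And>x. mm_cost k C lam x \<le> (\<Sum>j<k. lam j * V j (x j))"
  shows "superlinear (V i)"
  unfolding superlinear_def
proof
  fix w :: 'a
  define u where "u = w /\<^sub>R (C * (1 - lam i))"
  define E where "E = (\<Sum>j\<in>{..<k} - {i}. lam j * V j u)"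
  define D where "D = mm_cost k C lam ((\<lambda>_. u)(i := 0))"
  have fin: "finite {..<k}" and i: "i \<in> {..<k}"
    using assms(1) by auto
  have "(\<Sum>j\<in>{..<k} - {i}. lam j *\<^sub>R u) = (1 - lam i) *\<^sub>R u"
    using assms(4) sum.remove[OF fin i, of lam] by (simp add: scaleR_sum_left[symmetric])
  moreover have "C * lam i * inner y ((1 - lam i) *\<^sub>R u) = lam i * inner y w" for y
    using assms(3,5) by (simp add: u_def field_simps)
  ultimately have lin: "C * lam i * inner y (\<Sum>j\<in>{..<k} - {i}. lam j *\<^sub>R u) = lam i * inner y w" for y
    by simp
  have sum_V: "(\<Sum>j<k. lam j * V j (((\<lambda>_. u)(i := y)) j)) = lam i * V i y + E" for y
    unfolding sum.remove[OF fin i] E_def by (auto intro!: sum.cong)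
  have "lam i * inner y w + D \<le> lam i * V i y + E" for y
    using cost_le[of "(\<lambda>_. u)(i := y)"] mm_cost_fun_upd[OF assms(1), of C lam "\<lambda>_. u" y]
      lin[of y] sum_V[of y]
    unfolding D_def by linarith
  then have "inner y w - (E - D) / lam i \<le> V i y" for y
    using assms(2) by (simp add: field_simps)
  then show "\<exists>K. \<forall>y. inner y w - K \<le> V i y"
    by blast
qed

lemma superlinear_cmult:
  assumes "c > 0" and "superlinear V"
  shows "superlinear (\<lambda>y. c * V y)"
  unfolding superlinear_def
proof
  fix w
  obtain K where "\<forall>y. inner y (w /\<^sub>R c) - K \<le> V y"
    using assms(2) unfolding superlinear_def by blast
  then have "\<forall>y. inner y w - c * K \<le> c * V y"
    using assms(1) by (simp add: field_simps)
  then show "\<exists>K. \<forall>y. inner y w - K \<le> c * V y"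
    by blast
qed

lemma superlinear_ge_sum_abs_Basis:
  fixes V :: "'a::euclidean_space \<Rightarrow> real"
  assumes "superlinear V"
  obtains K where "\<And>y. (\<Sum>b\<in>Basis. \<bar>y \<bullet> b\<bar>) - K \<le> V y"
proof -
  define n where "n = real DIM('a)"
  have "\<exists>K. \<forall>y. n * \<bar>y \<bullet> b\<bar> - K \<le> V y" for b :: 'a
  proof -
    obtain K1 K2 where K1: "\<forall>y. inner y (n *\<^sub>R b) - K1 \<le> V y"
      and K2: "\<forall>y. inner y (- n *\<^sub>R b) - K2 \<le> V y"
      using assms unfolding superlinear_def by meson
    have "n * \<bar>y \<bullet> b\<bar> - max K1 K2 \<le> V y" for y
      using K1[rule_format, of y] K2[rule_format, of y] by (simp add: abs_if inner_commute) linarith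
    then show ?thesis
      by blast
  qed
  then obtain K where K: "\<And>b y. n * \<bar>y \<bullet> b\<bar> - K b \<le> V y"
    by metis
  have "n * (\<Sum>b\<in>Basis. \<bar>y \<bullet> b\<bar>) - (\<Sum>b\<in>Basis. K b) \<le> n * V y" for y
    using sum_mono[of Basis "\<lambda>b. n * \<bar>y \<bullet> b\<bar> - K b" "\<lambda>_. V y", OF K]
    by (simp add: n_def sum_subtractf sum_distrib_left)
  moreover have "n > 0"
    by (simp add: n_def)
  ultimately show ?thesis
    using that[of "(\<Sum>b\<in>Basis. K b) / n"] by (simp add: field_simps)
qed

lemma integrable_exp_neg_abs: "integrable lborel (\<lambda>t::real. exp (- \<bar>t\<bar>))"
proof -
  have pos: "integrable lborel (\<lambda>t::real. exp (- t) * indicator {0..} t)"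
    using has_bochner_integral_I0i_power_exp_m'[of 0] by (simp add: integrable.intros)
  then have neg: "integrable lborel (\<lambda>t::real. exp (- (- t)) * indicator {0..} (- t))"
    using lborel_integrable_real_affine[OF pos, of "-1" 0] by simp
  show ?thesis
    by (rule Bochner_Integration.integrable_bound[OF Bochner_Integration.integrable_add[OF pos neg]])
      (auto split: split_indicator)
qed

lemma integrable_exp_neg_sum_abs_Basis:
  "integrable lborel (\<lambda>y::'a::euclidean_space. exp (- (\<Sum>b\<in>Basis. \<bar>y \<bullet> b\<bar>)))"
proof (rule integrableI_nn_integral_finite)
  have "(\<integral>\<^sup>+t. ennreal (exp (- \<bar>t\<bar>)) \<partial>lborel) = ennreal (\<integral>t. exp (- \<bar>t\<bar>) \<partial>lborel)"
    using integrable_exp_neg_abs by (rule nn_integral_eq_integral) auto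
  then have "(\<integral>\<^sup>+y. (\<Prod>b\<in>Basis. ennreal (exp (- \<bar>y \<bullet> b\<bar>))) \<partial>(lborel::'a measure))
      = ennreal ((\<integral>t. exp (- \<bar>t\<bar>) \<partial>lborel) ^ DIM('a))"
    using nn_integral_lborel_prod[of "\<lambda>_ t. ennreal (exp (- \<bar>t\<bar>))"]
    by (simp add: ennreal_power)
  then show "(\<integral>\<^sup>+y. ennreal (exp (- (\<Sum>b\<in>Basis. \<bar>y \<bullet> b\<bar>))) \<partial>(lborel::'a measure))
      = ennreal ((\<integral>t. exp (- \<bar>t\<bar>) \<partial>lborel) ^ DIM('a))"
    by (simp add: exp_sum[symmetric] sum_negf prod_ennreal)
qed auto

lemma integrable_exp_neg_superlinear:
  fixes V :: "'a::euclidean_space \<Rightarrow> real"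
  assumes [measurable]: "V \<in> borel_measurable lborel" and "superlinear V"
  shows "integrable lborel (\<lambda>y. exp (- V y))"
proof -
  obtain K where K: "\<And>y. (\<Sum>b\<in>Basis. \<bar>y \<bullet> b\<bar>) - K \<le> V y"
    using superlinear_ge_sum_abs_Basis[OF assms(2)] by blast
  have bound: "norm (exp (- V y)) \<le> norm (exp K * exp (- (\<Sum>b\<in>Basis. \<bar>y \<bullet> b\<bar>)))" for y
  proof -
    have "exp (- V y) \<le> exp (K + - (\<Sum>b\<in>Basis. \<bar>y \<bullet> b\<bar>))"
      using K[of y] by simp
    then show ?thesis
      unfolding exp_add by simp
  qed
  have "integrable lborel (\<lambda>y::'a. exp K * exp (- (\<Sum>b\<in>Basis. \<bar>y \<bullet> b\<bar>)))"
    using integrable_exp_neg_sum_abs_Basis by simp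
  then show ?thesis
    by (rule Bochner_Integration.integrable_bound) (measurable, use bound in blast)
qed

lemma abs_exp_neg_mult_le:
  fixes v K :: real
  assumes "- K \<le> v" and "0 \<le> K"
  shows "\<bar>exp (- v) * v\<bar> \<le> K * exp (- v) + 2 * exp (- (v / 2))"
proof (cases "v \<ge> 0")
  case True
  have "v / 2 \<le> exp (v / 2)"
    using exp_ge_add_one_self[of "v / 2"] by linarith
  then have "exp (- v) * v \<le> 2 * (exp (- v) * exp (v / 2))"
    by (simp add: mult_left_mono)
  also have "exp (- v) * exp (v / 2) = exp (- (v / 2))"
    by (simp flip: exp_add)
  finally show ?thesis
    using True assms(2) by (simp add: abs_mult add_increasing)
next
  case False
  then have "\<bar>exp (- v) * v\<bar> = - v * exp (- v)"
    by (simp add: abs_mult)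
  also have "\<dots> \<le> K * exp (- v)"
    using assms(1) by (intro mult_right_mono) auto
  finally show ?thesis
    using exp_gt_zero[of "- (v / 2)"] by linarith
qed

lemma integrable_exp_neg_mult_superlinear:
  fixes V :: "'a::euclidean_space \<Rightarrow> real"
  assumes [measurable]: "V \<in> borel_measurable lborel" and "superlinear V"
  shows "integrable lborel (\<lambda>y. exp (- V y) * V y)"
proof -
  obtain K where K: "\<And>y. - K \<le> V y"
    using assms(2) unfolding superlinear_def by (metis inner_zero_right diff_0)
  have half: "integrable lborel (\<lambda>y. exp (- (1 / 2 * V y)))"
    using assms by (intro integrable_exp_neg_superlinear superlinear_cmult) auto
  have bound: "norm (exp (- V y) * V y) \<le> norm (max K 0 * exp (- V y) + 2 * exp (- (V y / 2)))" for y
    using abs_exp_neg_mult_le[of "max K 0" "V y"] K[of y] by simp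
  have "integrable lborel (\<lambda>y. max K 0 * exp (- V y) + 2 * exp (- (V y / 2)))"
    using integrable_exp_neg_superlinear[OF assms] half by simp
  then show ?thesis
    by (rule Bochner_Integration.integrable_bound) (measurable, use bound in blast)
qed

lemma integral_exp_neg_pos:
  fixes V :: "'a::euclidean_space \<Rightarrow> real"
  assumes "integrable lborel (\<lambda>x. exp (- V x))"
  shows "0 < (\<integral>x. exp (- V x) \<partial>lborel)"
proof -
  have "(\<integral>x. exp (- V x) \<partial>lborel) \<noteq> 0"
  proof
    assume "(\<integral>x. exp (- V x) \<partial>lborel) = 0"
    then have "AE x in lborel. exp (- V x) = 0"
      using integral_nonneg_eq_0_iff_AE[of lborel "\<lambda>x. exp (- V x)"] assms by simp
    then have "AE x in (lborel::'a measure). False"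
      by simp
    then show False
      by (subst (asm) AE_iff_measurable[of UNIV]) auto
  qed
  then show ?thesis
    by (simp add: order_less_le)
qed

lemma prob_space_gibbs_measure:
  assumes [measurable]: "V \<in> borel_measurable lborel"
    and "integrable lborel (\<lambda>x. exp (- V x))"
  shows "prob_space (gibbs_measure V)"
proof
  let ?Z = "\<integral>x. exp (- V x) \<partial>lborel"
  have "(\<integral>\<^sup>+x. ennreal (exp (- V x) / ?Z) \<partial>lborel) = ennreal (\<integral>x. exp (- V x) / ?Z \<partial>lborel)"
    using assms(2) by (intro nn_integral_eq_integral) auto
  also have "\<dots> = 1"
    using integral_exp_neg_pos[OF assms(2)] by simp
  finally show "emeasure (gibbs_measure V) (space (gibbs_measure V)) = 1"
    by (simp add: gibbs_measure_def emeasure_density)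
qed

lemma integral_gibbs_measure:
  assumes [measurable]: "V \<in> borel_measurable lborel" "f \<in> borel_measurable lborel"
  shows "(\<integral>x. f x \<partial>gibbs_measure V)
    = (\<integral>x. exp (- V x) * f x \<partial>lborel) / (\<integral>x. exp (- V x) \<partial>lborel)"
  unfolding gibbs_measure_def by (subst integral_density) auto

lemma integrable_gibbs_measure_iff:
  assumes [measurable]: "V \<in> borel_measurable lborel" "f \<in> borel_measurable lborel"
    and "integrable lborel (\<lambda>x. exp (- V x))"
  shows "integrable (gibbs_measure V) f \<longleftrightarrow> integrable lborel (\<lambda>x. exp (- V x) * f x)"
proof -
  have "(\<lambda>x. (exp (- V x) / (\<integral>y. exp (- V y) \<partial>lborel)) *\<^sub>R f x)
      = (\<lambda>x. exp (- V x) * f x * inverse (\<integral>y. exp (- V y) \<partial>lborel))"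
    by (simp add: fun_eq_iff field_simps)
  then show ?thesis
    using integral_exp_neg_pos[OF assms(3)]
    unfolding gibbs_measure_def by (subst integrable_density) auto
qed

lemma gibbs_variational_inequality:
  fixes V U :: "'a::euclidean_space \<Rightarrow> real"
  assumes [measurable]: "V \<in> borel_measurable lborel"
    and V: "integrable lborel (\<lambda>x. exp (- V x))" "integrable (gibbs_measure V) V"
    and U: "integrable (gibbs_measure V) U" "(\<integral>\<^sup>+x. ennreal (exp (- U x)) \<partial>lborel) < \<infinity>"
  shows "(\<integral>x. exp (- V x) \<partial>lborel) * exp (\<integral>x. V x - U x \<partial>gibbs_measure V)
    \<le> enn2real (\<integral>\<^sup>+x. ennreal (exp (- U x)) \<partial>lborel)"
proof -
  interpret prob_space "gibbs_measure V"
    using prob_space_gibbs_measure[OF assms(1) V(1)] .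
  have [measurable]: "U \<in> borel_measurable lborel"
    using borel_measurable_integrable[OF U(1)] by (simp add: gibbs_measure_def)
  have exp_U: "integrable lborel (\<lambda>x. exp (- U x))"
    using U(2) by (intro integrableI_bounded) auto
  have enn2real_U: "enn2real (\<integral>\<^sup>+x. ennreal (exp (- U x)) \<partial>lborel) = (\<integral>x. exp (- U x) \<partial>lborel)"
    using nn_integral_eq_integral[OF exp_U] by simp
  have exp_V_U: "exp (- V x) * exp (V x - U x) = exp (- U x)" for x
    by (simp flip: exp_add)
  have "integrable (gibbs_measure V) (\<lambda>x. exp (V x - U x))"
    using exp_U V(1) by (subst integrable_gibbs_measure_iff) (auto simp: exp_V_U)
  then have "exp (\<integral>x. V x - U x \<partial>gibbs_measure V) \<le> (\<integral>x. exp (V x - U x) \<partial>gibbs_measure V)"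
    using V(2) U(1) by (intro jensens_inequality[where I = UNIV] exp_convex) auto
  also have "\<dots> = (\<integral>x. exp (- U x) \<partial>lborel) / (\<integral>x. exp (- V x) \<partial>lborel)"
    by (simp add: integral_gibbs_measure exp_V_U)
  finally show ?thesis
    using integral_exp_neg_pos[OF V(1)] by (simp add: enn2real_U field_simps)
qed

lemma integrable_gibbs_measure_superlinear:
  fixes V :: "'a::euclidean_space \<Rightarrow> real"
  assumes [measurable]: "V \<in> borel_measurable lborel" and "superlinear V"
  shows "integrable (gibbs_measure V) V"
  using integrable_exp_neg_mult_superlinear[OF assms] integrable_exp_neg_superlinear[OF assms]
  by (subst integrable_gibbs_measure_iff) auto

lemma dual_solution_sum_integral_diff_nonneg:
  assumes "dual_solution k \<mu> c w" and "dual_admissible k \<mu> c w'"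
  shows "0 \<le> (\<Sum>i<k. \<integral>x. w' i x - w i x \<partial>\<mu> i)"
proof -
  have "dual_value k \<mu> w \<le> dual_value k \<mu> w'"
    using assms unfolding dual_solution_def by blast
  moreover have "dual_value k \<mu> w' - dual_value k \<mu> w = (\<Sum>i<k. \<integral>x. w' i x - w i x \<partial>\<mu> i)"
    using assms unfolding dual_solution_def dual_admissible_def dual_value_def sum_subtractf[symmetric]
    by (intro sum.cong) auto
  ultimately show ?thesis
    by simp
qed

lemma prod_powr_mult_exp:
  fixes z a l :: "'i \<Rightarrow> real"
  assumes "finite A" and "\<And>i. i \<in> A \<Longrightarrow> 0 \<le> z i"
  shows "(\<Prod>i\<in>A. (z i * exp (a i)) powr l i) = (\<Prod>i\<in>A. z i powr l i) * exp (\<Sum>i\<in>A. l i * a i)"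
proof -
  have "(z i * exp (a i)) powr l i = z i powr l i * exp (l i * a i)" if "i \<in> A" for i
    using assms(2)[OF that] by (subst powr_mult) (auto simp: powr_def mult.commute)
  then show ?thesis
    using assms(1) by (simp add: exp_sum prod.distrib)
qed

theorem mainTheorem15:
  fixes k :: nat and C :: real and lam :: "nat \<Rightarrow> real"
    and V U :: "nat \<Rightarrow> 'a::euclidean_space \<Rightarrow> real"
  assumes "k \<ge> 2" and "C > 0"
    and "\<forall>i<k. 0 < lam i \<and> lam i < 1" and "(\<Sum>i<k. lam i) = 1"
    and "\<forall>i<k. V i \<in> borel_measurable lborel"
    and "\<forall>i<k. integrable lborel (\<lambda>x. exp (- V i x))"
    and "\<forall>x :: nat \<Rightarrow> 'a. (\<Sum>i<k. lam i * V i (x i)) \<ge> mm_cost k C lam x"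
    and "dual_solution k (\<lambda>i. gibbs_measure (V i)) (mm_cost k C lam) (\<lambda>i y. lam i * U i y)"
  shows "(\<forall>i<k. (\<integral>\<^sup>+ x. ennreal (exp (- U i x)) \<partial>lborel) < \<infinity>) \<longrightarrow>
    (\<Prod>i<k. (\<integral>x. exp (- V i x) \<partial>lborel) powr lam i)
      \<le> (\<Prod>i<k. enn2real (\<integral>\<^sup>+ x. ennreal (exp (- U i x)) \<partial>lborel) powr lam i)"
proof
  assume U_fin: "\<forall>i<k. (\<integral>\<^sup>+ x. ennreal (exp (- U i x)) \<partial>lborel) < \<infinity>"
  define \<mu> where "\<mu> = (\<lambda>i. gibbs_measure (V i))"
  define a where "a = (\<lambda>i. \<integral>x. V i x - U i x \<partial>\<mu> i)"
  have V_int: "integrable (\<mu> i) (V i)" if "i < k" for i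
    using that assms(2-5,7) unfolding \<mu>_def
    by (intro integrable_gibbs_measure_superlinear superlinear_of_mm_cost_le[where V = V]) auto
  have U_int: "integrable (\<mu> i) (U i)" if "i < k" for i
  proof -
    have "integrable (\<mu> i) (\<lambda>y. lam i * U i y)"
      using that assms(8) unfolding dual_solution_def dual_admissible_def \<mu>_def by blast
    then show ?thesis
      using that assms(3) by fastforce
  qed
  have "dual_admissible k \<mu> (mm_cost k C lam) (\<lambda>i y. lam i * V i y)"
    using V_int assms(7) unfolding dual_admissible_def by auto
  then have "0 \<le> (\<Sum>i<k. \<integral>x. lam i * V i x - lam i * U i x \<partial>\<mu> i)"
    using assms(8) unfolding \<mu>_def by (rule dual_solution_sum_integral_diff_nonneg[rotated])
  also have "\<dots> = (\<Sum>i<k. lam i * a i)"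
    unfolding a_def by (simp flip: right_diff_distrib)
  finally have "(\<Prod>i<k. (\<integral>x. exp (- V i x) \<partial>lborel) powr lam i) * 1
      \<le> (\<Prod>i<k. (\<integral>x. exp (- V i x) \<partial>lborel) powr lam i) * exp (\<Sum>i<k. lam i * a i)"
    by (intro mult_left_mono prod_nonneg) auto
  then have "(\<Prod>i<k. (\<integral>x. exp (- V i x) \<partial>lborel) powr lam i)
      \<le> (\<Prod>i<k. ((\<integral>x. exp (- V i x) \<partial>lborel) * exp (a i)) powr lam i)"
    by (subst prod_powr_mult_exp) auto
  also have "\<dots> \<le> (\<Prod>i<k. enn2real (\<integral>\<^sup>+ x. ennreal (exp (- U i x)) \<partial>lborel) powr lam i)"
    using assms(3,5,6) U_fin V_int U_int unfolding a_def \<mu>_def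
    by (intro prod_mono conjI powr_mono2 gibbs_variational_inequality) auto
  finally show "(\<Prod>i<k. (\<integral>x. exp (- V i x) \<partial>lborel) powr lam i)
      \<le> (\<Prod>i<k. enn2real (\<integral>\<^sup>+ x. ennreal (exp (- U i x)) \<partial>lborel) powr lam i)" .
qed

end
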